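(* Let $k\ge1$ and let $f:\mathbb{N}^k\to\mathbb{N}$ be minimal. Let $B\subseteq\mathbb{N}$ satisfy $\bar d(B)=0$ and $\bar d(f[B^k])>0$. Then for each $i\ge0$ the set $B\setminus[0,i]$ also satisfies $\bar d(B\setminus[0,i])=0$ and $\bar d(f[(B\setminus[0,i])^k])>0$; in fact $\bar d(f[(B\setminus[0,i])^k])=\bar d(f[B^k])$.
   Context: $\mathbb{N}=\{0,1,2,\dots\}$. For $A\subseteq\mathbb{N}$, $\bar d(A)=\limsup_{n\to\infty}\frac{|A\cap[0,n)|}{n}$. $\mathscr{C}_{I_{\bar d=0}}$ is the set of all finitary functions $f:\mathbb{N}^k\to\mathbb{N}$ ($k\ge1$) such that $\bar d(f[A^k])=0$ whenever $\bar d(A)=0$. For $f:\mathbb{N}^k\to\mathbb{N}$, a permutation $\pi$ of $\{1,\dots,k\}$ and a tuple $\bar a=(a_1,\dots,a_\ell)\in\mathbb{N}^\ell$ with $0\le\ell<k$, the shadow $f_{\pi,\bar a}$ is the $(k-\ell)$-ary function $f_{\pi,\bar a}(y_1,\dots,y_{k-\ell})=f_\pi(a_1,\dots,a_\ell,y_1,\dots,y_{k-\ell})$, where $f_\pi(x_1,\dots,x_k)=f(x_{\pi(1)},\dots,x_{\pi(k)})$. The shadow is proper if $\ell>0$. $f$ is called minimal if $f\notin\mathscr{C}_{I_{\bar d=0}}$ and every proper shadow of $f$ lies in $\mathscr{C}_{I_{\bar d=0}}$. *)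

theory Defs
  imports "HOL-Analysis.Analysis" "HOL-Combinatorics.Permutations"
begin

definition upper_density :: "nat set \<Rightarrow> ereal" where
  "upper_density A = limsup (\<lambda>n. ereal (real (card (A \<inter> {..<n})) / real n))"

text \<open>A k-ary function N^k \<rightarrow> N is represented as a function on lists,
  only its values on lists of length k matter.  f[A^k]:\<close>
definition img_pow :: "nat \<Rightarrow> (nat list \<Rightarrow> nat) \<Rightarrow> nat set \<Rightarrow> nat set" where
  "img_pow k f A = {f xs | xs. length xs = k \<and> set xs \<subseteq> A}"

definition in_C_dzero :: "nat \<Rightarrow> (nat list \<Rightarrow> nat) \<Rightarrow> bool" where
  "in_C_dzero k f \<longleftrightarrow> k \<ge> 1 \<and>
     (\<forall>A. upper_density A = 0 \<longrightarrow> upper_density (img_pow k f A) = 0)"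

text \<open>f_pi(x_1..x_k) = f(x_{pi 1},..,x_{pi k}) (0-indexed here), shadow fixes the
  first length(as) arguments of f_pi to as.\<close>
definition permute_args :: "nat \<Rightarrow> (nat \<Rightarrow> nat) \<Rightarrow> (nat list \<Rightarrow> nat) \<Rightarrow> nat list \<Rightarrow> nat" where
  "permute_args k \<pi> f xs = f (map (\<lambda>i. xs ! \<pi> i) [0..<k])"

definition shadow :: "nat \<Rightarrow> (nat list \<Rightarrow> nat) \<Rightarrow> (nat \<Rightarrow> nat) \<Rightarrow> nat list \<Rightarrow> nat list \<Rightarrow> nat" where
  "shadow k f \<pi> as ys = permute_args k \<pi> f (as @ ys)"

definition minimal_fun :: "nat \<Rightarrow> (nat list \<Rightarrow> nat) \<Rightarrow> bool" where
  "minimal_fun k f \<longleftrightarrow> \<not> in_C_dzero k f \<and>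
     (\<forall>\<pi> as. \<pi> permutes {..<k} \<and> 0 < length as \<and> length as < k \<longrightarrow>
        in_C_dzero (k - length as) (shadow k f \<pi> as))"

end

theory Submission
  imports Defs
begin

text \<open>Every tuple in \<open>B\<^sup>k\<close> that meets the finite set \<open>{0..i}\<close> has some argument
  fixed to one of finitely many values, so its image lies in one of finitely many proper
  shadows applied to \<open>B\<close> (for \<open>k = 1\<close> these images form a finite set instead). By
  minimality each such shadow image has density zero, and a finite union of null sets is
  null. Hence removing \<open>{0..i}\<close> from \<open>B\<close> changes
  \<open>f[B\<^sup>k]\<close> only by a null set, which does not affect the upper density.\<close>

lemma upper_density_nonneg: "0 \<le> upper_density A"
  unfolding upper_density_def by (rule le_Limsup) auto

lemma upper_density_mono: "A \<subseteq> C \<Longrightarrow> upper_density A \<le> upper_density C"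
  unfolding upper_density_def
  by (intro Limsup_mono always_eventually allI) (auto intro!: divide_right_mono card_mono)

lemma upper_density_null_subset:
  "A \<subseteq> C \<Longrightarrow> upper_density C = 0 \<Longrightarrow> upper_density A = 0"
  using upper_density_mono[of A C] upper_density_nonneg[of A] by simp

lemma upper_density_Un_le: "upper_density (A \<union> C) \<le> upper_density A + upper_density C"
proof -
  let ?dens = "\<lambda>X n. ereal (real (card (X \<inter> {..<n})) / real n)"
  have "upper_density (A \<union> C) \<le> limsup (\<lambda>n. ?dens A n + ?dens C n)"
    unfolding upper_density_def
  proof (intro Limsup_mono always_eventually allI)
    fix n
    have "card ((A \<union> C) \<inter> {..<n}) \<le> card (A \<inter> {..<n}) + card (C \<inter> {..<n})"
      by (metis Int_Un_distrib2 card_Un_le)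
    then show "?dens (A \<union> C) n \<le> ?dens A n + ?dens C n"
      by (simp add: add_divide_distrib[symmetric] divide_right_mono)
  qed
  also have "\<dots> \<le> upper_density A + upper_density C"
    unfolding upper_density_def by (rule ereal_limsup_add_mono)
  finally show ?thesis .
qed

lemma upper_density_Un_null:
  "upper_density C = 0 \<Longrightarrow> upper_density (A \<union> C) = upper_density A"
  using upper_density_Un_le[of A C] upper_density_mono[of A "A \<union> C"] by simp

lemma upper_density_UN_null:
  "finite I \<Longrightarrow> (\<And>x. x \<in> I \<Longrightarrow> upper_density (S x) = 0) \<Longrightarrow> upper_density (\<Union>x\<in>I. S x) = 0"
proof (induction I rule: finite_induct)
  case empty
  then show ?case
    by (simp add: upper_density_def Limsup_const zero_ereal_def[symmetric])
next
  case (insert x F)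
  then show ?case using upper_density_Un_null[of "S x" "\<Union>x\<in>F. S x"] by (simp add: Un_commute)
qed

lemma upper_density_finite: "finite A \<Longrightarrow> upper_density A = 0"
proof -
  assume "finite A"
  have "upper_density A \<le> limsup (\<lambda>n. ereal (real (card A) / real n))"
    unfolding upper_density_def
    by (intro Limsup_mono always_eventually allI)
       (auto intro!: divide_right_mono card_mono \<open>finite A\<close>)
  also have "\<dots> = 0"
    by (rule lim_imp_Limsup) (auto intro!: lim_const_over_n simp: zero_ereal_def)
  finally show ?thesis using upper_density_nonneg[of A] by simp
qed

lemma img_pow_shadow_transpose:
  assumes "length xs = k" "set xs \<subseteq> B" "j < k" "k \<ge> 2"
  shows "f xs \<in> img_pow (k - 1) (shadow k f (Transposition.transpose 0 j) [xs ! j]) B"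
proof -
  define \<pi> where "\<pi> = Transposition.transpose (0::nat) j"
  define zs where "zs = map (\<lambda>t. xs ! \<pi> t) [0..<k]"
  have \<pi>_bound: "\<pi> t < k" if "t < k" for t
    using that assms(3) by (auto simp: \<pi>_def Transposition.transpose_def)
  have "zs \<noteq> []" "hd zs = xs ! j"
    using assms(4) by (auto simp: zs_def \<pi>_def hd_map upt_conv_Cons)
  then have zs_cons: "xs ! j # tl zs = zs"
    by (metis list.collapse)
  have "map (\<lambda>t. zs ! \<pi> t) [0..<k] = xs"
    using assms(1) \<pi>_bound by (intro nth_equalityI) (auto simp: zs_def \<pi>_def)
  then have "f xs = shadow k f \<pi> [xs ! j] (tl zs)"
    by (simp add: shadow_def permute_args_def zs_cons)
  moreover have "set zs \<subseteq> B"
    using assms(1,2) \<pi>_bound by (auto simp: zs_def)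
  then have "length (tl zs) = k - 1" "set (tl zs) \<subseteq> B"
    using list.set_sel(2)[of zs] \<open>zs \<noteq> []\<close> by (auto simp: zs_def)
  ultimately show ?thesis unfolding img_pow_def \<pi>_def by blast
qed

lemma shadow_single_null:
  assumes "minimal_fun k f" "upper_density B = 0" "j < k" "k \<ge> 2"
  shows "upper_density (img_pow (k - 1) (shadow k f (Transposition.transpose 0 j) [a]) B) = 0"
proof -
  have "Transposition.transpose 0 j permutes {..<k}"
    using assms(3) by (intro permutes_swap_id) auto
  moreover have "0 < length [a]" "length [a] < k"
    using assms(4) by auto
  ultimately have "in_C_dzero (k - length [a]) (shadow k f (Transposition.transpose 0 j) [a])"
    using assms(1) unfolding minimal_fun_def by blast
  with assms(2) show ?thesis
    unfolding in_C_dzero_def by simp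
qed

lemma img_pow_meeting_finite_null:
  assumes "minimal_fun k f" "upper_density B = 0" "finite C"
  shows "upper_density {f xs | xs. length xs = k \<and> set xs \<subseteq> B \<and> set xs \<inter> C \<noteq> {}} = 0"
    (is "upper_density ?E = 0")
proof (cases "k \<ge> 2")
  case True
  define S where "S p = img_pow (k - 1) (shadow k f (Transposition.transpose 0 (snd p)) [fst p]) B"
    for p :: "nat \<times> nat"
  have "?E \<subseteq> (\<Union>p\<in>C \<times> {..<k}. S p)"
  proof
    fix y assume "y \<in> ?E"
    then obtain xs j where xs: "y = f xs" "length xs = k" "set xs \<subseteq> B" "j < k" "xs ! j \<in> C"
      by (auto simp: in_set_conv_nth) blast
    then have "y \<in> S (xs ! j, j)"
      using img_pow_shadow_transpose[of xs k B j f] True by (simp add: S_def)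
    with xs(4,5) show "y \<in> (\<Union>p\<in>C \<times> {..<k}. S p)"
      by blast
  qed
  moreover have "upper_density (\<Union>p\<in>C \<times> {..<k}. S p) = 0"
  proof (rule upper_density_UN_null)
    show "finite (C \<times> {..<k})"
      using assms(3) by simp
    fix p assume "p \<in> C \<times> {..<k}"
    then show "upper_density (S p) = 0"
      unfolding S_def by (intro shadow_single_null[OF assms(1,2) _ True]) auto
  qed
  ultimately show ?thesis
    by (rule upper_density_null_subset)
next
  case False
  have "?E \<subseteq> (\<lambda>a. f [a]) ` C"
  proof
    fix y assume "y \<in> ?E"
    then obtain xs where xs: "y = f xs" "length xs = k" "set xs \<inter> C \<noteq> {}"
      by blast
    with False have "length xs = Suc 0"
      by (cases xs) auto
    then obtain a where "xs = [a]"
      by (cases xs) auto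
    with xs show "y \<in> (\<lambda>a. f [a]) ` C"
      by auto
  qed
  then show ?thesis
    by (rule upper_density_null_subset[OF _ upper_density_finite]) (simp add: assms(3))
qed

lemma upper_density_img_pow_Diff_finite:
  assumes "minimal_fun k f" "upper_density B = 0" "finite C"
  shows "upper_density (img_pow k f (B - C)) = upper_density (img_pow k f B)"
proof (rule antisym)
  show "upper_density (img_pow k f (B - C)) \<le> upper_density (img_pow k f B)"
    by (rule upper_density_mono) (auto simp: img_pow_def)
  let ?E = "{f xs | xs. length xs = k \<and> set xs \<subseteq> B \<and> set xs \<inter> C \<noteq> {}}"
  have "img_pow k f B \<subseteq> img_pow k f (B - C) \<union> ?E"
    by (auto simp: img_pow_def)
  then have "upper_density (img_pow k f B) \<le> upper_density (img_pow k f (B - C) \<union> ?E)"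
    by (rule upper_density_mono)
  also have "\<dots> = upper_density (img_pow k f (B - C))"
    using img_pow_meeting_finite_null[OF assms] by (rule upper_density_Un_null)
  finally show "upper_density (img_pow k f B) \<le> upper_density (img_pow k f (B - C))" .
qed

theorem mainTheorem4:
  fixes k :: nat and f :: "nat list \<Rightarrow> nat" and B :: "nat set"
  assumes "k \<ge> 1"
    and "minimal_fun k f"
    and "upper_density B = 0"
    and "upper_density (img_pow k f B) > 0"
  shows "\<forall>i::nat. upper_density (B - {0..i}) = 0
          \<and> upper_density (img_pow k f (B - {0..i})) > 0
          \<and> upper_density (img_pow k f (B - {0..i})) = upper_density (img_pow k f B)"
proof
  fix i :: nat
  have "upper_density (B - {0..i}) = 0"
    using assms(3) by (rule upper_density_null_subset[rotated]) blast
  moreover have "upper_density (img_pow k f (B - {0..i})) = upper_density (img_pow k f B)"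
    using assms(2,3) by (rule upper_density_img_pow_Diff_finite) simp
  ultimately show "upper_density (B - {0..i}) = 0
          \<and> upper_density (img_pow k f (B - {0..i})) > 0
          \<and> upper_density (img_pow k f (B - {0..i})) = upper_density (img_pow k f B)"
    using assms(4) by simp
qed

end
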